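(* In the setting below, two vertices $\rho_\lambda W(D_5)$ and $\rho_{\lambda'}W(D_5)$ ($\lambda,\lambda'\in\Lambda$) of the GKM graph $\mathcal G(EIII)$ are adjacent if and only if $\lambda-\lambda'=\alpha$ for some root $\alpha\in\Phi(E_6)$, and in that case the label of the corresponding edge is $(\alpha)$.
   Context: Identify the dual of the Lie algebra of a maximal torus $T$ of $E_6$ with $\{\sum_{i=1}^8x_ie_i\in\mathbb R^8: x_6=x_7=-x_8\}$ with the standard inner product. The simple roots are $\alpha_1=\frac12(e_1-e_2-e_3-e_4-e_5-e_6-e_7+e_8)$, $\alpha_2=e_1+e_2$, $\alpha_i=e_{i-1}-e_{i-2}$ ($3\le i\le6$), and $\Phi(E_6)=\{\pm(e_i+e_j),\pm(e_i-e_j)\ (1\le i<j\le5)\}\cup\{\pm\frac12(\sum_{k=1}^5\mu_ke_k+e_8-e_7-e_6): \mu_k=\pm1,\ \prod\mu_k=1\}$. $H^*(BT)=H^*(BT;\mathbb Z)$ is the polynomial (symmetric) algebra over $\mathbb Z$ on the lattice $H^2(BT)$ spanned by $t_0=\frac12(e_1+\dots+e_5)-\frac16(e_8-e_7-e_6)$, $t_i=e_i+\frac13(e_8-e_7-e_6)$ ($1\le i\le5$), $x=\frac12(e_1+\dots+e_5-e_6-e_7+e_8)$; $W(E_6)$ acts on it. Let $W(D_5)\subset W(E_6)$ be generated by the reflections of $\alpha_2,\dots,\alpha_6$, let $\bar t=\frac23(e_8-e_7-e_6)$ (fixed by $W(D_5)$), $\Lambda=\{w(\bar t):w\in W(E_6)\}$,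 and for $\lambda\in\Lambda$ fix $\rho_\lambda\in W(E_6)$ with $\rho_\lambda(\bar t)=\lambda$ (so $wW(D_5)\mapsto w(\bar t)$ identifies $W(E_6)/W(D_5)$ with $\Lambda$). The GKM graph $\mathcal G(EIII)$ has vertex set $W(E_6)/W(D_5)$ and, for distinct vertices $vW(D_5)\ne wW(D_5)$ and each positive root $\alpha$ (positive with respect to the simple roots above) with $\sigma_\alpha vW(D_5)=wW(D_5)$, an edge labelled by the ideal $(\alpha)\subset H^*(BT)$; here $\sigma_\alpha$ is the reflection of $\alpha$. *)

theory Defs
  imports Complex_Main "HOL-Library.Function_Algebras"
begin

(* Vectors of R^8 are modelled as functions nat => real supported on {1..8};
   addition/subtraction are pointwise (Function_Algebras). *)
type_synonym vec = "nat \<Rightarrow> real"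

definition e :: "nat \<Rightarrow> vec" where
  "e i = (\<lambda>k. if k = i then 1 else 0)"

definition smul :: "real \<Rightarrow> vec \<Rightarrow> vec" (infixr "*\<^sub>v" 75) where
  "c *\<^sub>v v = (\<lambda>k. c * v k)"

definition ip :: "vec \<Rightarrow> vec \<Rightarrow> real" where
  "ip u v = (\<Sum>k\<in>{1..8}. u k * v k)"

definition refl :: "vec \<Rightarrow> vec \<Rightarrow> vec" where
  "refl a v = v - (2 * ip v a / ip a a) *\<^sub>v a"

definition simple_root :: "nat \<Rightarrow> vec" where
  "simple_root i =
     (if i = 1 then (1/2) *\<^sub>v (e 1 - e 2 - e 3 - e 4 - e 5 - e 6 - e 7 + e 8)
      else if i = 2 then e 1 + e 2
      else e (i - 1) - e (i - 2))"

definition PhiE6 :: "vec set" where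
  "PhiE6 =
     {s *\<^sub>v (e i + e j) | s i j. s \<in> {1, -1} \<and> 1 \<le> i \<and> i < j \<and> j \<le> 5}
   \<union> {s *\<^sub>v (e i - e j) | s i j. s \<in> {1, -1} \<and> 1 \<le> i \<and> i < j \<and> j \<le> 5}
   \<union> {s *\<^sub>v ((1/2) *\<^sub>v ((\<Sum>k\<in>{1..5}. mu k *\<^sub>v e k) + e 8 - e 7 - e 6)) | s mu.
        s \<in> {1, -1} \<and> (\<forall>k\<in>{1..5}. mu k \<in> {1, -1}) \<and> (\<Prod>k\<in>{1..5}. mu k) = 1}"

definition pos_roots :: "vec set" where
  "pos_roots = {a \<in> PhiE6. \<exists>c :: nat \<Rightarrow> nat. a = (\<Sum>i\<in>{1..6}. real (c i) *\<^sub>v simple_root i)}"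

inductive_set WE6 :: "(vec \<Rightarrow> vec) set" where
  WE6_id: "id \<in> WE6"
| WE6_step: "w \<in> WE6 \<Longrightarrow> i \<in> {1..6} \<Longrightarrow> refl (simple_root i) \<circ> w \<in> WE6"

inductive_set WD5 :: "(vec \<Rightarrow> vec) set" where
  WD5_id: "id \<in> WD5"
| WD5_step: "w \<in> WD5 \<Longrightarrow> i \<in> {2..6} \<Longrightarrow> refl (simple_root i) \<circ> w \<in> WD5"

definition coset :: "(vec \<Rightarrow> vec) \<Rightarrow> (vec \<Rightarrow> vec) set" where
  "coset w = {w \<circ> u | u. u \<in> WD5}"

definition tbar :: vec where
  "tbar = (2/3) *\<^sub>v (e 8 - e 7 - e 6)"

definition Lambda :: "vec set" where
  "Lambda = {w tbar | w. w \<in> WE6}"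

definition tgen :: "nat \<Rightarrow> vec" where
  "tgen i = (if i = 0 then (1/2) *\<^sub>v (e 1 + e 2 + e 3 + e 4 + e 5) - (1/6) *\<^sub>v (e 8 - e 7 - e 6)
             else e i + (1/3) *\<^sub>v (e 8 - e 7 - e 6))"

definition xgen :: vec where
  "xgen = (1/2) *\<^sub>v (e 1 + e 2 + e 3 + e 4 + e 5 - e 6 - e 7 + e 8)"

definition H2 :: "vec set" where
  "H2 = {(\<Sum>i\<in>{0..5}. real_of_int (c i) *\<^sub>v tgen i) + real_of_int d *\<^sub>v xgen | c d. True}"

(* H^*(BT) = Sym_Z(H^2(BT)), realised as the Z-algebra of polynomial functions on the
   Lie algebra (inside R^8) generated by the linear forms  v |-> <l, v>,  l in H^2(BT). *)
inductive_set HBT :: "(vec \<Rightarrow> real) set" where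
  HBT_const: "(\<lambda>v. real_of_int c) \<in> HBT"
| HBT_lin: "l \<in> H2 \<Longrightarrow> (\<lambda>v. ip l v) \<in> HBT"
| HBT_add: "f \<in> HBT \<Longrightarrow> g \<in> HBT \<Longrightarrow> (\<lambda>v. f v + g v) \<in> HBT"
| HBT_mult: "f \<in> HBT \<Longrightarrow> g \<in> HBT \<Longrightarrow> (\<lambda>v. f v * g v) \<in> HBT"

definition label_ideal :: "vec \<Rightarrow> (vec \<Rightarrow> real) set" where
  "label_ideal a = {(\<lambda>v. ip a v * f v) | f. f \<in> HBT}"

definition GKM_vertices :: "(vec \<Rightarrow> vec) set set" where
  "GKM_vertices = {coset w | w. w \<in> WE6}"

definition GKM_edge :: "(vec \<Rightarrow> vec) set \<Rightarrow> (vec \<Rightarrow> vec) set \<Rightarrow> vec \<Rightarrow> bool" where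
  "GKM_edge C C' b \<longleftrightarrow> C \<in> GKM_vertices \<and> C' \<in> GKM_vertices \<and> C \<noteq> C' \<and>
      b \<in> pos_roots \<and> (\<lambda>u. refl b \<circ> u) ` C = C'"

definition GKM_adjacent :: "(vec \<Rightarrow> vec) set \<Rightarrow> (vec \<Rightarrow> vec) set \<Rightarrow> bool" where
  "GKM_adjacent C C' \<longleftrightarrow> (\<exists>b. GKM_edge C C' b)"

end

theory Submission
  imports Defs
begin

text \<open>\<open>W(E6)\<close> permutes the 27 weights \<open>\<Lambda>\<close>, and \<open>W(D5)\<close> is exactly the stabiliser
  of \<open>tbar\<close>; so \<open>w W(D5) \<mapsto> w tbar\<close> identifies the vertices with \<open>\<Lambda>\<close>, and the
  reflection \<open>\<sigma>\<^sub>b\<close> moves the vertex of \<open>\<lambda>\<close> to that of \<open>\<sigma>\<^sub>b \<lambda> = \<lambda> - \<langle>\<lambda>, b\<rangle> b\<close>.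
  As \<open>\<langle>\<lambda>, \<lambda>\<rangle> = 4/3\<close>, \<open>\<langle>b, b\<rangle> = 2\<close> and \<open>\<langle>\<lambda>, b\<rangle> \<in> {-1, 0, 1}\<close>, the reflection moves
  \<open>\<lambda>\<close> exactly when \<open>\<lambda> - \<sigma>\<^sub>b \<lambda> = \<plusminus>b\<close>. Conversely, if \<open>\<lambda> - \<lambda>'\<close> is a root \<open>a\<close>,
  expanding \<open>\<langle>a, a\<rangle> = 2\<close> gives \<open>\<langle>\<lambda>, a\<rangle> = 1\<close>, so \<open>\<sigma>\<^sub>a \<lambda> = \<lambda>'\<close>, and \<open>\<sigma>\<^sub>a = \<sigma>\<^sub>b\<close>
  for the positive root \<open>b = \<plusminus>a\<close>.

  The finite facts about \<open>W(E6)\<close> used here (a transversal of \<open>W(D5)\<close>, the inner products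
  of weights and roots, root reflections lying in \<open>W(E6)\<close>, the sign of each root) are
  certified by evaluation in integer coordinates.\<close>

section \<open>Reflections and the Weyl groups\<close>

lemma smul_apply [simp]: "(c *\<^sub>v v) k = c * v k"
  by (simp add: smul_def)

lemma smul_one: "1 *\<^sub>v v = v"
  by (simp add: fun_eq_iff)

lemma smul_minus_one: "(-1) *\<^sub>v v = - v"
  by (simp add: fun_eq_iff)

lemma ip_commute: "ip u v = ip v u"
  by (simp add: ip_def mult.commute)

lemma ip_diff_left: "ip (u - v) w = ip u w - ip v w"
  by (simp add: ip_def algebra_simps sum_subtractf)

lemma ip_diff_right: "ip w (u - v) = ip w u - ip w v"
  by (simp add: ip_def algebra_simps sum_subtractf)

lemma ip_add_right: "ip w (u + v) = ip w u + ip w v"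
  by (simp add: ip_def algebra_simps sum.distrib)

lemma ip_scale_left: "ip (c *\<^sub>v u) w = c * ip u w"
  by (simp add: ip_def algebra_simps sum_distrib_left)

lemma ip_scale_right: "ip w (c *\<^sub>v u) = c * ip w u"
  by (simp add: ip_def algebra_simps sum_distrib_left)

lemma ip_e_right:
  assumes "j \<in> {1..8}"
  shows "ip u (e j) = u j"
proof -
  have "ip u (e j) = (\<Sum>k\<in>{1..8}. if k = j then u k else 0)"
    unfolding ip_def e_def by (rule sum.cong) auto
  then show ?thesis
    using assms by simp
qed

lemma refl_orthogonal: "ip v a = 0 \<Longrightarrow> refl a v = v"
  by (simp add: refl_def fun_eq_iff)

lemma refl_norm_2: "ip b b = 2 \<Longrightarrow> refl b v = v - ip v b *\<^sub>v b"
  by (simp add: refl_def)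

lemma refl_uminus: "refl (- a) = refl a"
  by (simp add: refl_def fun_eq_iff ip_def sum_negf)

lemma refl_refl:
  assumes "ip a a \<noteq> 0"
  shows "refl a (refl a v) = v"
proof -
  have "ip (refl a v) a = - ip v a"
    using assms by (simp add: refl_def ip_diff_left ip_scale_left)
  then show ?thesis
    using assms by (simp add: refl_def fun_eq_iff)
qed

lemma refl_ip:
  assumes "ip a a \<noteq> 0"
  shows "ip (refl a x) (refl a y) = ip x y"
  using assms
  by (simp add: refl_def ip_diff_left ip_diff_right ip_scale_left ip_scale_right
      ip_commute[of a x] ip_commute[of a y])

lemma refl_diff_scale: "refl a (x - c *\<^sub>v y) = refl a x - c *\<^sub>v refl a y"
  by (simp add: refl_def fun_eq_iff ip_diff_left ip_scale_left algebra_simps diff_divide_distrib)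

lemma refl_refl_conj:
  assumes "ip a a \<noteq> 0"
  shows "refl (refl a v) = refl a \<circ> refl v \<circ> refl a"
proof
  fix x
  let ?c = "2 * ip (refl a x) v / ip v v"
  have "(refl a \<circ> refl v \<circ> refl a) x = refl a (refl a x - ?c *\<^sub>v v)"
    by (simp add: refl_def)
  also have "\<dots> = x - ?c *\<^sub>v refl a v"
    by (simp add: refl_diff_scale refl_refl assms)
  also have "?c = 2 * ip x (refl a v) / ip (refl a v) (refl a v)"
    using refl_ip[OF assms, of x "refl a v"] refl_ip[OF assms, of v v] refl_refl[OF assms]
    by simp
  finally show "refl (refl a v) x = (refl a \<circ> refl v \<circ> refl a) x"
    by (simp only: refl_def[of "refl a v" x])
qed

lemma WE6_comp: "w \<in> WE6 \<Longrightarrow> w' \<in> WE6 \<Longrightarrow> w \<circ> w' \<in> WE6"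
  by (induction rule: WE6.induct) (auto simp: o_assoc[symmetric] intro: WE6.intros)

lemma WD5_comp: "u \<in> WD5 \<Longrightarrow> u' \<in> WD5 \<Longrightarrow> u \<circ> u' \<in> WD5"
  by (induction rule: WD5.induct) (auto simp: o_assoc[symmetric] intro: WD5.intros)

lemma refl_simple_root_WE6: "i \<in> {1..6} \<Longrightarrow> refl (simple_root i) \<in> WE6"
  using WE6_step[OF WE6_id] by simp

lemma refl_simple_root_WD5: "i \<in> {2..6} \<Longrightarrow> refl (simple_root i) \<in> WD5"
  using WD5_step[OF WD5_id] by simp

lemma ip_tbar_simple_root:
  assumes "i \<in> {2..6}"
  shows "ip tbar (simple_root i) = 0"
proof -
  have tbar_e: "ip tbar (e j) = 0" if "j \<in> {1..5}" for j
    using that by (simp add: ip_e_right) (simp add: tbar_def e_def)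
  show ?thesis
  proof (cases "i = 2")
    case True
    then show ?thesis
      by (simp add: simple_root_def ip_add_right tbar_e)
  next
    case False
    then have "i - 1 \<in> {1..5}" "i - 2 \<in> {1..5}" "i \<noteq> 1"
      using assms by auto
    then show ?thesis
      using False by (simp add: simple_root_def ip_diff_right tbar_e)
  qed
qed

lemma WD5_fixes_tbar: "u \<in> WD5 \<Longrightarrow> u tbar = tbar"
  by (induction rule: WD5.induct) (simp_all add: refl_orthogonal ip_tbar_simple_root)

section \<open>Integer coordinates\<close>

text \<open>Vectors and linear maps with rational coordinates, written as integer lists over a common
  denominator, so that finite facts about them can be checked by evaluation. A map
  \<open>frac_mat d M\<close> is the identity outside the coordinates \<open>1..8\<close>, like every reflection in
  a vector supported there.\<close>

definition frac_vec :: "int \<Rightarrow> int list \<Rightarrow> vec" where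
  "frac_vec d x = (\<lambda>k. if k \<in> {1..8} then of_int (x ! (k - 1)) / of_int d else 0)"

definition frac_mat :: "int \<Rightarrow> int list list \<Rightarrow> vec \<Rightarrow> vec" where
  "frac_mat d M v =
     (\<lambda>k. if k \<in> {1..8} then (\<Sum>j\<in>{1..8}. of_int (M ! (k - 1) ! (j - 1)) / of_int d * v j) else v k)"

definition int_dot :: "int list \<Rightarrow> int list \<Rightarrow> int" where
  "int_dot x y = (\<Sum>k<8. x ! k * y ! k)"

definition mat_vec :: "int list list \<Rightarrow> int list \<Rightarrow> int list" where
  "mat_vec M x = map (\<lambda>k. \<Sum>j<8. M ! k ! j * x ! j) [0..<8]"

definition mat_mult :: "int list list \<Rightarrow> int list list \<Rightarrow> int list list" where
  "mat_mult A B = map (\<lambda>k. map (\<lambda>j. \<Sum>l<8. A ! k ! l * B ! l ! j) [0..<8]) [0..<8]"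

definition scalar_mat :: "int \<Rightarrow> int list list" where
  "scalar_mat d = map (\<lambda>k. map (\<lambda>j. if k = j then d else 0) [0..<8]) [0..<8]"

definition refl_mat :: "int list \<Rightarrow> int list list" where
  "refl_mat x =
     map (\<lambda>k. map (\<lambda>j. (if k = j then int_dot x x else 0) - 2 * x ! k * x ! j) [0..<8]) [0..<8]"

definition same_frac_vec :: "int \<Rightarrow> int list \<Rightarrow> int \<Rightarrow> int list \<Rightarrow> bool" where
  "same_frac_vec d x d' y \<longleftrightarrow> list_all (\<lambda>k. x ! k * d' = y ! k * d) [0..<8]"

definition same_frac_mat :: "int \<Rightarrow> int list list \<Rightarrow> int \<Rightarrow> int list list \<Rightarrow> bool" where
  "same_frac_mat d A d' B \<longleftrightarrow>
     list_all (\<lambda>k. list_all (\<lambda>j. A ! k ! j * d' = B ! k ! j * d) [0..<8]) [0..<8]"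

lemma sum_atLeast_1_shift: "(\<Sum>j\<in>{1..n::nat}. f (j - 1)) = (\<Sum>j<n. f j)"
  by (induction n) (simp_all add: sum.lessThan_Suc)

lemma nth_mat_vec: "k < 8 \<Longrightarrow> mat_vec M x ! k = (\<Sum>j<8. M ! k ! j * x ! j)"
  by (simp add: mat_vec_def)

lemma nth_mat_mult: "k < 8 \<Longrightarrow> j < 8 \<Longrightarrow> mat_mult A B ! k ! j = (\<Sum>l<8. A ! k ! l * B ! l ! j)"
  by (simp add: mat_mult_def)

lemma frac_vec_eqI:
  assumes "\<And>k. k \<in> {1..8} \<Longrightarrow> v k = frac_vec d x k" and "\<And>k. k \<notin> {1..8} \<Longrightarrow> v k = 0"
  shows "v = frac_vec d x"
proof
  fix k
  show "v k = frac_vec d x k"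
    using assms by (cases "k \<in> {1..8}") (auto simp: frac_vec_def)
qed

lemma frac_vec_inj:
  assumes "frac_vec d x = frac_vec d y" "d \<noteq> 0" "length x = 8" "length y = 8"
  shows "x = y"
proof (rule nth_equalityI)
  show "length x = length y"
    using assms by simp
  fix k
  assume "k < length x"
  moreover have "frac_vec d x (Suc k) = frac_vec d y (Suc k)"
    using assms(1) by simp
  ultimately show "x ! k = y ! k"
    using assms by (simp add: frac_vec_def)
qed

lemma same_frac_vec_eq:
  assumes "d \<noteq> 0" "d' \<noteq> 0" "same_frac_vec d x d' y"
  shows "frac_vec d x = frac_vec d' y"
proof
  fix k
  show "frac_vec d x k = frac_vec d' y k"
  proof (cases "k \<in> {1..8}")
    case True
    then have "x ! (k - 1) * d' = y ! (k - 1) * d"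
      using assms(3) by (auto simp: same_frac_vec_def list_all_iff)
    then have "real_of_int (x ! (k - 1)) * of_int d' = of_int (y ! (k - 1)) * of_int d"
      by (metis of_int_mult)
    then show ?thesis
      using True assms by (simp add: frac_vec_def field_simps)
  qed (auto simp: frac_vec_def)
qed

lemma same_frac_mat_eq:
  assumes "d \<noteq> 0" "d' \<noteq> 0" "same_frac_mat d A d' B"
  shows "frac_mat d A = frac_mat d' B"
proof (intro ext)
  fix v k
  show "frac_mat d A v k = frac_mat d' B v k"
  proof (cases "k \<in> {1..8}")
    case True
    have "real_of_int (A ! (k - 1) ! (j - 1)) / of_int d =
        of_int (B ! (k - 1) ! (j - 1)) / of_int d'"
      if "j \<in> {1..8}" for j
    proof -
      have "A ! (k - 1) ! (j - 1) * d' = B ! (k - 1) ! (j - 1) * d"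
        using True that assms(3) by (auto simp: same_frac_mat_def list_all_iff)
      then have "real_of_int (A ! (k - 1) ! (j - 1)) * of_int d' =
          of_int (B ! (k - 1) ! (j - 1)) * of_int d"
        by (metis of_int_mult)
      then show ?thesis
        using assms by (simp add: field_simps)
    qed
    then show ?thesis
      using True by (simp add: frac_mat_def)
  qed (auto simp: frac_mat_def)
qed

lemma frac_mat_scalar: "d \<noteq> 0 \<Longrightarrow> frac_mat d (scalar_mat d) = id"
proof (intro ext)
  fix v k
  assume "d \<noteq> 0"
  show "frac_mat d (scalar_mat d) v k = id v k"
  proof (cases "k \<in> {1..8}")
    case True
    have "frac_mat d (scalar_mat d) v k =
        (\<Sum>j\<in>{1..8}. of_int (scalar_mat d ! (k - 1) ! (j - 1)) / of_int d * v j)"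
      using True by (simp add: frac_mat_def)
    also have "\<dots> = (\<Sum>j\<in>{1..8}. if k = j then v j else 0)"
      using True \<open>d \<noteq> 0\<close> by (intro sum.cong) (auto simp: scalar_mat_def)
    also have "\<dots> = v k"
      using True by simp
    finally show ?thesis
      by simp
  qed (auto simp: frac_mat_def)
qed

lemma frac_mat_comp:
  assumes "a \<noteq> 0" "b \<noteq> 0"
  shows "frac_mat a A \<circ> frac_mat b B = frac_mat (a * b) (mat_mult A B)"
proof (intro ext)
  fix v k
  show "(frac_mat a A \<circ> frac_mat b B) v k = frac_mat (a * b) (mat_mult A B) v k"
  proof (cases "k \<in> {1..8}")
    case True
    have "(frac_mat a A \<circ> frac_mat b B) v k =
        (\<Sum>l\<in>{1..8}. of_int (A ! (k - 1) ! (l - 1)) / of_int a *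
           (\<Sum>j\<in>{1..8}. of_int (B ! (l - 1) ! (j - 1)) / of_int b * v j))"
      using True by (simp add: frac_mat_def)
    also have "\<dots> = (\<Sum>j\<in>{1..8}. \<Sum>l\<in>{1..8}. of_int (A ! (k - 1) ! (l - 1)) / of_int a *
           (of_int (B ! (l - 1) ! (j - 1)) / of_int b * v j))"
      by (simp add: sum_distrib_left, rule sum.swap)
    also have "\<dots> = (\<Sum>j\<in>{1..8}. of_int (mat_mult A B ! (k - 1) ! (j - 1)) / of_int (a * b) * v j)"
    proof (rule sum.cong[OF refl])
      fix j :: nat
      assume j: "j \<in> {1..8}"
      have "mat_mult A B ! (k - 1) ! (j - 1) = (\<Sum>l<8. A ! (k - 1) ! l * B ! l ! (j - 1))"
        using True j by (intro nth_mat_mult) auto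
      also have "\<dots> = (\<Sum>l\<in>{1..8}. A ! (k - 1) ! (l - 1) * B ! (l - 1) ! (j - 1))"
        by (rule sum_atLeast_1_shift[symmetric])
      finally have entry: "mat_mult A B ! (k - 1) ! (j - 1) =
          (\<Sum>l\<in>{1..8}. A ! (k - 1) ! (l - 1) * B ! (l - 1) ! (j - 1))" .
      show "(\<Sum>l\<in>{1..8}. of_int (A ! (k - 1) ! (l - 1)) / of_int a *
             (of_int (B ! (l - 1) ! (j - 1)) / of_int b * v j)) =
          of_int (mat_mult A B ! (k - 1) ! (j - 1)) / of_int (a * b) * v j"
        unfolding entry of_int_sum of_int_mult using assms
        by (simp add: sum_divide_distrib sum_distrib_right mult_ac) (simp add: sum_distrib_left)
    qed
    also have "\<dots> = frac_mat (a * b) (mat_mult A B) v k"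
      using True by (simp add: frac_mat_def)
    finally show ?thesis .
  qed (auto simp: frac_mat_def)
qed

lemma frac_mat_frac_vec:
  assumes "a \<noteq> 0" "d \<noteq> 0"
  shows "frac_mat a M (frac_vec d x) = frac_vec (a * d) (mat_vec M x)"
proof
  fix k
  show "frac_mat a M (frac_vec d x) k = frac_vec (a * d) (mat_vec M x) k"
  proof (cases "k \<in> {1..8}")
    case True
    have "mat_vec M x ! (k - 1) = (\<Sum>j<8. M ! (k - 1) ! j * x ! j)"
      using True by (intro nth_mat_vec) auto
    also have "\<dots> = (\<Sum>j\<in>{1..8}. M ! (k - 1) ! (j - 1) * x ! (j - 1))"
      by (rule sum_atLeast_1_shift[symmetric])
    finally show ?thesis
      using True assms by (simp add: frac_mat_def frac_vec_def sum_divide_distrib)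
  qed (auto simp: frac_mat_def frac_vec_def)
qed

lemma ip_frac_vec:
  "ip (frac_vec d x) (frac_vec d' y) = of_int (int_dot x y) / (of_int d * of_int d')"
proof -
  have "ip (frac_vec d x) (frac_vec d' y) =
      (\<Sum>j\<in>{1..8}. of_int (x ! (j - 1) * y ! (j - 1))) / (of_int d * of_int d')"
    unfolding ip_def by (simp add: frac_vec_def sum_divide_distrib)
  also have "(\<Sum>j\<in>{1..8}. real_of_int (x ! (j - 1) * y ! (j - 1))) = of_int (int_dot x y)"
    unfolding int_dot_def of_int_sum by (rule sum_atLeast_1_shift)
  finally show ?thesis .
qed

lemma refl_frac_vec:
  assumes "d \<noteq> 0" "int_dot x x \<noteq> 0"
  shows "refl (frac_vec d x) = frac_mat (int_dot x x) (refl_mat x)"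
proof (intro ext)
  fix v k
  define q where "q = int_dot x x"
  have q: "real_of_int q \<noteq> 0"
    using assms(2) by (simp add: q_def)
  have ip_v: "ip v (frac_vec d x) = (\<Sum>j\<in>{1..8}. v j * of_int (x ! (j - 1))) / of_int d"
    by (simp add: ip_def frac_vec_def sum_divide_distrib)
  show "refl (frac_vec d x) v k = frac_mat (int_dot x x) (refl_mat x) v k"
  proof (cases "k \<in> {1..8}")
    case True
    have entry:
      "refl_mat x ! (k - 1) ! (j - 1) = (if k = j then q else 0) - 2 * x ! (k - 1) * x ! (j - 1)"
      if "j \<in> {1..8}" for j
      using True that by (auto simp: refl_mat_def q_def)
    have "frac_mat q (refl_mat x) v k =
        (\<Sum>j\<in>{1..8}. of_int (refl_mat x ! (k - 1) ! (j - 1)) / of_int q * v j)"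
      using True by (simp add: frac_mat_def)
    also have "\<dots> = (\<Sum>j\<in>{1..8}. (if k = j then v j else 0) -
        2 * of_int (x ! (k - 1)) * (v j * of_int (x ! (j - 1))) / of_int q)"
    proof (rule sum.cong[OF refl])
      fix j :: nat
      assume "j \<in> {1..8}"
      then show "of_int (refl_mat x ! (k - 1) ! (j - 1)) / of_int q * v j =
          (if k = j then v j else 0) - 2 * of_int (x ! (k - 1)) * (v j * of_int (x ! (j - 1))) / of_int q"
        unfolding entry[OF \<open>j \<in> {1..8}\<close>] using q by (simp add: field_simps)
    qed
    also have "\<dots> =
        v k - 2 * of_int (x ! (k - 1)) * (\<Sum>j\<in>{1..8}. v j * of_int (x ! (j - 1))) / of_int q"
      using True by (simp add: sum_subtractf sum_divide_distrib sum_distrib_left mult.assoc)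
    also have "\<dots> = refl (frac_vec d x) v k"
      using True assms(1) q
      by (simp add: refl_def ip_v ip_frac_vec q_def[symmetric]) (simp add: frac_vec_def field_simps)
    finally show ?thesis
      by (simp add: q_def)
  qed (auto simp: refl_def frac_mat_def frac_vec_def)
qed

definition tbar_coords :: "int list" where
  "tbar_coords = [0, 0, 0, 0, 0, -4, -4, 4]"

definition simple_root_coords :: "nat \<Rightarrow> int list" where
  "simple_root_coords i =
     [[1, -1, -1, -1, -1, -1, -1, 1], [2, 2, 0, 0, 0, 0, 0, 0], [-2, 2, 0, 0, 0, 0, 0, 0],
      [0, -2, 2, 0, 0, 0, 0, 0], [0, 0, -2, 2, 0, 0, 0, 0], [0, 0, 0, -2, 2, 0, 0, 0]] ! (i - 1)"

lemma tbar_frac_vec: "tbar = frac_vec 6 tbar_coords"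
proof (rule frac_vec_eqI)
  fix k :: nat
  assume "k \<in> {1..8}"
  then have "k = 1 \<or> k = 2 \<or> k = 3 \<or> k = 4 \<or> k = 5 \<or> k = 6 \<or> k = 7 \<or> k = 8"
    by auto
  then show "tbar k = frac_vec 6 tbar_coords k"
    by (elim disjE) (simp_all add: tbar_def e_def frac_vec_def tbar_coords_def)
qed (auto simp: tbar_def e_def)

lemma simple_root_frac_vec:
  assumes "i \<in> {1..6}"
  shows "simple_root i = frac_vec 2 (simple_root_coords i)"
proof -
  have i: "i = 1 \<or> i = 2 \<or> i = 3 \<or> i = 4 \<or> i = 5 \<or> i = 6"
    using assms by auto
  show ?thesis
  proof (rule frac_vec_eqI)
    fix k :: nat
    assume "k \<in> {1..8}"
    then have "k = 1 \<or> k = 2 \<or> k = 3 \<or> k = 4 \<or> k = 5 \<or> k = 6 \<or> k = 7 \<or> k = 8"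
      by auto
    then show "simple_root i k = frac_vec 2 (simple_root_coords i) k"
      using i
      by (elim disjE; simp only:; simp add: simple_root_def e_def frac_vec_def simple_root_coords_def)
  next
    fix k :: nat
    assume "k \<notin> {1..8}"
    then show "simple_root i k = 0"
      using i by (elim disjE; simp only:; auto simp: simple_root_def e_def)
  qed
qed

lemma int_dot_simple_root_coords:
  assumes "i \<in> {1..6}"
  shows "int_dot (simple_root_coords i) (simple_root_coords i) = 8"
proof -
  have "i = 1 \<or> i = 2 \<or> i = 3 \<or> i = 4 \<or> i = 5 \<or> i = 6"
    using assms by auto
  then show ?thesis
    by (elim disjE) (simp_all add: int_dot_def simple_root_coords_def lessThan_nat_numeral)
qed

lemma ip_simple_root: "i \<in> {1..6} \<Longrightarrow> ip (simple_root i) (simple_root i) = 2"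
  by (simp add: simple_root_frac_vec ip_frac_vec int_dot_simple_root_coords)

lemma refl_simple_root_frac_mat:
  "i \<in> {1..6} \<Longrightarrow> refl (simple_root i) = frac_mat 8 (refl_mat (simple_root_coords i))"
  using refl_frac_vec[of 2 "simple_root_coords i"]
  by (simp add: simple_root_frac_vec int_dot_simple_root_coords)

section \<open>Cosets of \<open>W(D5)\<close>\<close>

lemma WD5_right_inverse: "u \<in> WD5 \<Longrightarrow> \<exists>v\<in>WD5. u \<circ> v = id"
proof (induction rule: WD5.induct)
  case WD5_id
  show ?case
    using WD5.WD5_id comp_id by blast
next
  case (WD5_step w i)
  then obtain v where v: "v \<in> WD5" "w \<circ> v = id"
    by blast
  have "refl (simple_root i) \<circ> refl (simple_root i) = id"
    using WD5_step.hyps(2) by (auto simp: fun_eq_iff refl_refl ip_simple_root)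
  then have "refl (simple_root i) \<circ> w \<circ> (v \<circ> refl (simple_root i)) = id"
    using v(2) by (simp add: comp_assoc) (metis comp_assoc id_comp)
  then show ?case
    using WD5_comp[OF v(1) refl_simple_root_WD5[OF WD5_step.hyps(2)]] by blast
qed

text \<open>A transversal of \<open>W(D5)\<close> in \<open>W(E6)\<close>: the maps \<open>coset_rep n\<close>, \<open>n < 27\<close>, given by integer
  matrices over the denominator 4. An entry \<open>coset_action ! (i - 1) ! n = (m, j)\<close> records
  \<open>\<sigma>\<^sub>i \<circ> coset_rep n = coset_rep m \<circ> \<sigma>\<^sub>j\<close> for the simple reflections \<open>\<sigma>\<close>, where \<open>j = 0\<close>
  stands for the identity.\<close>

definition coset_mats :: "int list list list" where
  "coset_mats =
   [[[4, 0, 0, 0, 0, 0, 0, 0], [0, 4, 0, 0, 0, 0, 0, 0], [0, 0, 4, 0, 0, 0, 0, 0], [0, 0, 0, 4, 0, 0, 0, 0],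
     [0, 0, 0, 0, 4, 0, 0, 0], [0, 0, 0, 0, 0, 4, 0, 0], [0, 0, 0, 0, 0, 0, 4, 0], [0, 0, 0, 0, 0, 0, 0, 4]],
    [[3, 1, 1, 1, 1, 1, 1, -1], [1, 3, -1, -1, -1, -1, -1, 1], [1, -1, 3, -1, -1, -1, -1, 1], [1, -1, -1, 3, -1, -1, -1, 1],
     [1, -1, -1, -1, 3, -1, -1, 1], [1, -1, -1, -1, -1, 3, -1, 1], [1, -1, -1, -1, -1, -1, 3, 1], [-1, 1, 1, 1, 1, 1, 1, 3]],
    [[1, 3, -1, -1, -1, -1, -1, 1], [3, 1, 1, 1, 1, 1, 1, -1], [1, -1, 3, -1, -1, -1, -1, 1], [1, -1, -1, 3, -1, -1, -1, 1],
     [1, -1, -1, -1, 3, -1, -1, 1], [1, -1, -1, -1, -1, 3, -1, 1], [1, -1, -1, -1, -1, -1, 3, 1], [-1, 1, 1, 1, 1, 1, 1, 3]],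
    [[1, 3, -1, -1, -1, -1, -1, 1], [1, -1, 3, -1, -1, -1, -1, 1], [3, 1, 1, 1, 1, 1, 1, -1], [1, -1, -1, 3, -1, -1, -1, 1],
     [1, -1, -1, -1, 3, -1, -1, 1], [1, -1, -1, -1, -1, 3, -1, 1], [1, -1, -1, -1, -1, -1, 3, 1], [-1, 1, 1, 1, 1, 1, 1, 3]],
    [[-1, 1, -3, 1, 1, 1, 1, -1], [-1, -3, 1, 1, 1, 1, 1, -1], [3, 1, 1, 1, 1, 1, 1, -1], [1, -1, -1, 3, -1, -1, -1, 1],
     [1, -1, -1, -1, 3, -1, -1, 1], [1, -1, -1, -1, -1, 3, -1, 1], [1, -1, -1, -1, -1, -1, 3, 1], [-1, 1, 1, 1, 1, 1, 1, 3]],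
    [[1, 3, -1, -1, -1, -1, -1, 1], [1, -1, 3, -1, -1, -1, -1, 1], [1, -1, -1, 3, -1, -1, -1, 1], [3, 1, 1, 1, 1, 1, 1, -1],
     [1, -1, -1, -1, 3, -1, -1, 1], [1, -1, -1, -1, -1, 3, -1, 1], [1, -1, -1, -1, -1, -1, 3, 1], [-1, 1, 1, 1, 1, 1, 1, 3]],
    [[-1, 1, -3, 1, 1, 1, 1, -1], [-1, -3, 1, 1, 1, 1, 1, -1], [1, -1, -1, 3, -1, -1, -1, 1], [3, 1, 1, 1, 1, 1, 1, -1],
     [1, -1, -1, -1, 3, -1, -1, 1], [1, -1, -1, -1, -1, 3, -1, 1], [1, -1, -1, -1, -1, -1, 3, 1], [-1, 1, 1, 1, 1, 1, 1, 3]],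
    [[1, 3, -1, -1, -1, -1, -1, 1], [1, -1, 3, -1, -1, -1, -1, 1], [1, -1, -1, 3, -1, -1, -1, 1], [1, -1, -1, -1, 3, -1, -1, 1],
     [3, 1, 1, 1, 1, 1, 1, -1], [1, -1, -1, -1, -1, 3, -1, 1], [1, -1, -1, -1, -1, -1, 3, 1], [-1, 1, 1, 1, 1, 1, 1, 3]],
    [[-1, 1, -3, 1, 1, 1, 1, -1], [1, -1, -1, 3, -1, -1, -1, 1], [-1, -3, 1, 1, 1, 1, 1, -1], [3, 1, 1, 1, 1, 1, 1, -1],
     [1, -1, -1, -1, 3, -1, -1, 1], [1, -1, -1, -1, -1, 3, -1, 1], [1, -1, -1, -1, -1, -1, 3, 1], [-1, 1, 1, 1, 1, 1, 1, 3]],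
    [[-1, 1, -3, 1, 1, 1, 1, -1], [-1, -3, 1, 1, 1, 1, 1, -1], [1, -1, -1, 3, -1, -1, -1, 1], [1, -1, -1, -1, 3, -1, -1, 1],
     [3, 1, 1, 1, 1, 1, 1, -1], [1, -1, -1, -1, -1, 3, -1, 1], [1, -1, -1, -1, -1, -1, 3, 1], [-1, 1, 1, 1, 1, 1, 1, 3]],
    [[1, -1, -1, 3, -1, -1, -1, 1], [-1, 1, -3, 1, 1, 1, 1, -1], [-1, -3, 1, 1, 1, 1, 1, -1], [3, 1, 1, 1, 1, 1, 1, -1],
     [1, -1, -1, -1, 3, -1, -1, 1], [1, -1, -1, -1, -1, 3, -1, 1], [1, -1, -1, -1, -1, -1, 3, 1], [-1, 1, 1, 1, 1, 1, 1, 3]],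
    [[-1, 1, -3, 1, 1, 1, 1, -1], [1, -1, -1, 3, -1, -1, -1, 1], [-1, -3, 1, 1, 1, 1, 1, -1], [1, -1, -1, -1, 3, -1, -1, 1],
     [3, 1, 1, 1, 1, 1, 1, -1], [1, -1, -1, -1, -1, 3, -1, 1], [1, -1, -1, -1, -1, -1, 3, 1], [-1, 1, 1, 1, 1, 1, 1, 3]],
    [[2, -2, -2, 2, 0, 0, 0, 0], [-2, 2, -2, 2, 0, 0, 0, 0], [-2, -2, 2, 2, 0, 0, 0, 0], [2, 2, 2, 2, 0, 0, 0, 0],
     [0, 0, 0, 0, 2, -2, -2, 2], [0, 0, 0, 0, -2, 2, -2, 2], [0, 0, 0, 0, -2, -2, 2, 2], [0, 0, 0, 0, 2, 2, 2, 2]],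
    [[1, -1, -1, 3, -1, -1, -1, 1], [-1, 1, -3, 1, 1, 1, 1, -1], [-1, -3, 1, 1, 1, 1, 1, -1], [1, -1, -1, -1, 3, -1, -1, 1],
     [3, 1, 1, 1, 1, 1, 1, -1], [1, -1, -1, -1, -1, 3, -1, 1], [1, -1, -1, -1, -1, -1, 3, 1], [-1, 1, 1, 1, 1, 1, 1, 3]],
    [[-1, 1, -3, 1, 1, 1, 1, -1], [1, -1, -1, 3, -1, -1, -1, 1], [1, -1, -1, -1, 3, -1, -1, 1], [-1, -3, 1, 1, 1, 1, 1, -1],
     [3, 1, 1, 1, 1, 1, 1, -1], [1, -1, -1, -1, -1, 3, -1, 1], [1, -1, -1, -1, -1, -1, 3, 1], [-1, 1, 1, 1, 1, 1, 1, 3]],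
    [[2, -2, -2, 2, 0, 0, 0, 0], [-2, 2, -2, 2, 0, 0, 0, 0], [-2, -2, 2, 2, 0, 0, 0, 0], [0, 0, 0, 0, 2, -2, -2, 2],
     [2, 2, 2, 2, 0, 0, 0, 0], [0, 0, 0, 0, -2, 2, -2, 2], [0, 0, 0, 0, -2, -2, 2, 2], [0, 0, 0, 0, 2, 2, 2, 2]],
    [[1, -1, -1, 3, -1, -1, -1, 1], [-1, 1, -3, 1, 1, 1, 1, -1], [1, -1, -1, -1, 3, -1, -1, 1], [-1, -3, 1, 1, 1, 1, 1, -1],
     [3, 1, 1, 1, 1, 1, 1, -1], [1, -1, -1, -1, -1, 3, -1, 1], [1, -1, -1, -1, -1, -1, 3, 1], [-1, 1, 1, 1, 1, 1, 1, 3]],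
    [[2, -2, -2, 2, 0, 0, 0, 0], [-2, 2, -2, 2, 0, 0, 0, 0], [0, 0, 0, 0, 2, -2, -2, 2], [-2, -2, 2, 2, 0, 0, 0, 0],
     [2, 2, 2, 2, 0, 0, 0, 0], [0, 0, 0, 0, -2, 2, -2, 2], [0, 0, 0, 0, -2, -2, 2, 2], [0, 0, 0, 0, 2, 2, 2, 2]],
    [[1, -1, -1, 3, -1, -1, -1, 1], [1, -1, -1, -1, 3, -1, -1, 1], [-1, 1, -3, 1, 1, 1, 1, -1], [-1, -3, 1, 1, 1, 1, 1, -1],
     [3, 1, 1, 1, 1, 1, 1, -1], [1, -1, -1, -1, -1, 3, -1, 1], [1, -1, -1, -1, -1, -1, 3, 1], [-1, 1, 1, 1, 1, 1, 1, 3]],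
    [[2, -2, -2, 2, 0, 0, 0, 0], [0, 0, 0, 0, 2, -2, -2, 2], [-2, 2, -2, 2, 0, 0, 0, 0], [-2, -2, 2, 2, 0, 0, 0, 0],
     [2, 2, 2, 2, 0, 0, 0, 0], [0, 0, 0, 0, -2, 2, -2, 2], [0, 0, 0, 0, -2, -2, 2, 2], [0, 0, 0, 0, 2, 2, 2, 2]],
    [[-1, 1, 1, 1, -3, 1, 1, -1], [-1, 1, 1, -3, 1, 1, 1, -1], [-1, 1, -3, 1, 1, 1, 1, -1], [-1, -3, 1, 1, 1, 1, 1, -1],
     [3, 1, 1, 1, 1, 1, 1, -1], [1, -1, -1, -1, -1, 3, -1, 1], [1, -1, -1, -1, -1, -1, 3, 1], [-1, 1, 1, 1, 1, 1, 1, 3]],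
    [[0, 0, 0, 0, -2, 2, 2, -2], [-2, 2, 2, -2, 0, 0, 0, 0], [-2, 2, -2, 2, 0, 0, 0, 0], [-2, -2, 2, 2, 0, 0, 0, 0],
     [2, 2, 2, 2, 0, 0, 0, 0], [0, 0, 0, 0, -2, 2, -2, 2], [0, 0, 0, 0, -2, -2, 2, 2], [0, 0, 0, 0, 2, 2, 2, 2]],
    [[0, 0, 0, 0, 2, -2, -2, 2], [2, -2, -2, 2, 0, 0, 0, 0], [-2, 2, -2, 2, 0, 0, 0, 0], [-2, -2, 2, 2, 0, 0, 0, 0],
     [2, 2, 2, 2, 0, 0, 0, 0], [0, 0, 0, 0, -2, 2, -2, 2], [0, 0, 0, 0, -2, -2, 2, 2], [0, 0, 0, 0, 2, 2, 2, 2]],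
    [[-2, 2, 2, -2, 0, 0, 0, 0], [0, 0, 0, 0, -2, 2, 2, -2], [-2, 2, -2, 2, 0, 0, 0, 0], [-2, -2, 2, 2, 0, 0, 0, 0],
     [2, 2, 2, 2, 0, 0, 0, 0], [0, 0, 0, 0, -2, 2, -2, 2], [0, 0, 0, 0, -2, -2, 2, 2], [0, 0, 0, 0, 2, 2, 2, 2]],
    [[-2, 2, 2, -2, 0, 0, 0, 0], [-2, 2, -2, 2, 0, 0, 0, 0], [0, 0, 0, 0, -2, 2, 2, -2], [-2, -2, 2, 2, 0, 0, 0, 0],
     [2, 2, 2, 2, 0, 0, 0, 0], [0, 0, 0, 0, -2, 2, -2, 2], [0, 0, 0, 0, -2, -2, 2, 2], [0, 0, 0, 0, 2, 2, 2, 2]],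
    [[-2, 2, 2, -2, 0, 0, 0, 0], [-2, 2, -2, 2, 0, 0, 0, 0], [-2, -2, 2, 2, 0, 0, 0, 0], [0, 0, 0, 0, -2, 2, 2, -2],
     [2, 2, 2, 2, 0, 0, 0, 0], [0, 0, 0, 0, -2, 2, -2, 2], [0, 0, 0, 0, -2, -2, 2, 2], [0, 0, 0, 0, 2, 2, 2, 2]],
    [[-2, 2, 2, -2, 0, 0, 0, 0], [-2, 2, -2, 2, 0, 0, 0, 0], [-2, -2, 2, 2, 0, 0, 0, 0], [2, 2, 2, 2, 0, 0, 0, 0],
     [0, 0, 0, 0, -2, 2, 2, -2], [0, 0, 0, 0, -2, 2, -2, 2], [0, 0, 0, 0, -2, -2, 2, 2], [0, 0, 0, 0, 2, 2, 2, 2]]]"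

definition coset_action :: "(nat \<times> nat) list list" where
  "coset_action =
   [[(1, 0), (0, 0), (2, 3), (3, 3), (4, 3), (5, 3), (6, 3), (7, 3), (8, 3),
     (9, 3), (12, 0), (11, 3), (10, 0), (15, 0), (14, 3), (13, 0), (17, 0), (16, 0),
     (19, 0), (18, 0), (21, 0), (20, 0), (22, 6), (23, 6), (24, 6), (25, 6), (26, 6)],
    [(0, 2), (1, 2), (2, 2), (4, 0), (3, 0), (6, 0), (5, 0), (9, 0), (8, 5),
     (7, 0), (10, 5), (11, 5), (12, 5), (13, 5), (14, 5), (15, 5), (16, 5), (17, 5),
     (20, 0), (21, 0), (18, 0), (19, 0), (23, 0), (22, 0), (24, 3), (25, 3), (26, 3)],
    [(0, 3), (2, 0), (1, 0), (3, 4), (4, 4), (5, 4), (6, 4), (7, 4), (10, 0),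
     (9, 4), (8, 0), (13, 0), (12, 3), (11, 0), (16, 0), (15, 3), (14, 0), (17, 3),
     (18, 6), (22, 0), (20, 6), (23, 0), (19, 0), (21, 0), (24, 5), (25, 5), (26, 5)],
    [(0, 4), (1, 4), (3, 0), (2, 0), (4, 2), (5, 5), (8, 0), (7, 5), (6, 0),
     (11, 0), (10, 4), (9, 0), (12, 4), (13, 4), (14, 6), (15, 4), (18, 0), (19, 0),
     (16, 0), (17, 0), (20, 5), (21, 5), (22, 3), (24, 0), (23, 0), (25, 4), (26, 4)],
    [(0, 5), (1, 5), (2, 5), (5, 0), (6, 0), (3, 0), (4, 0), (7, 6), (8, 2),
     (9, 6), (10, 2), (14, 0), (12, 2), (16, 0), (11, 0), (17, 0), (13, 0), (15, 0),
     (18, 4), (19, 4), (20, 4), (21, 4), (22, 4), (23, 4), (25, 0), (24, 0), (26, 2)],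
    [(0, 6), (1, 6), (2, 6), (3, 6), (4, 6), (7, 0), (9, 0), (5, 0), (11, 0),
     (6, 0), (13, 0), (8, 0), (15, 0), (10, 0), (14, 2), (12, 0), (16, 2), (17, 2),
     (18, 2), (19, 2), (20, 2), (21, 2), (22, 2), (23, 2), (24, 2), (26, 0), (25, 0)]]"

definition coset_rep :: "nat \<Rightarrow> vec \<Rightarrow> vec" where
  "coset_rep n = frac_mat 4 (coset_mats ! n)"

definition coset_action_ok :: "nat \<Rightarrow> nat \<Rightarrow> bool" where
  "coset_action_ok i n =
     (case coset_action ! (i - 1) ! n of (m, j) \<Rightarrow>
        m < 27 \<and>
        (let lhs = mat_mult (refl_mat (simple_root_coords i)) (coset_mats ! n) in
         if j = 0 then same_frac_mat 32 lhs 4 (coset_mats ! m)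
         else j \<in> {2..6} \<and>
           same_frac_mat 32 lhs 32 (mat_mult (coset_mats ! m) (refl_mat (simple_root_coords j)))))"

lemma coset_action_correct: "list_all (\<lambda>i. list_all (coset_action_ok i) [0..<27]) [1..<7]"
  by code_simp

lemma coset_rep_0: "coset_rep 0 = id"
proof -
  have "coset_mats ! 0 = scalar_mat 4"
    by code_simp
  then show ?thesis
    by (simp add: coset_rep_def frac_mat_scalar)
qed

lemma refl_simple_root_comp_coset_rep:
  assumes i: "i \<in> {1..6}" and n: "n < 27"
  shows "\<exists>m<27. \<exists>u\<in>WD5. refl (simple_root i) \<circ> coset_rep n = coset_rep m \<circ> u"
proof -
  obtain m j where mj: "coset_action ! (i - 1) ! n = (m, j)"
    by fastforce
  have ok: "coset_action_ok i n"
    using coset_action_correct i n by (auto simp: list_all_iff)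
  let ?lhs = "mat_mult (refl_mat (simple_root_coords i)) (coset_mats ! n)"
  have lhs: "refl (simple_root i) \<circ> coset_rep n = frac_mat 32 ?lhs"
    using frac_mat_comp[of 8 4] by (simp add: refl_simple_root_frac_mat[OF i] coset_rep_def)
  show ?thesis
  proof (cases "j = 0")
    case True
    then have "m < 27" "same_frac_mat 32 ?lhs 4 (coset_mats ! m)"
      using ok mj by (simp_all add: coset_action_ok_def)
    then have "refl (simple_root i) \<circ> coset_rep n = coset_rep m \<circ> id"
      using lhs same_frac_mat_eq[of 32 4] by (simp add: coset_rep_def)
    then show ?thesis
      using \<open>m < 27\<close> WD5_id by blast
  next
    case False
    then have j: "m < 27" "j \<in> {2..6}"
        "same_frac_mat 32 ?lhs 32 (mat_mult (coset_mats ! m) (refl_mat (simple_root_coords j)))"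
      using ok mj by (simp_all add: coset_action_ok_def)
    then have "refl (simple_root i) \<circ> coset_rep n =
        frac_mat 32 (mat_mult (coset_mats ! m) (refl_mat (simple_root_coords j)))"
      using lhs same_frac_mat_eq by simp
    also have "\<dots> = coset_rep m \<circ> refl (simple_root j)"
      using frac_mat_comp[of 4 8] j(2) by (simp add: refl_simple_root_frac_mat coset_rep_def)
    finally show ?thesis
      using j refl_simple_root_WD5 by blast
  qed
qed

lemma WE6_coset_decomposition: "w \<in> WE6 \<Longrightarrow> \<exists>n<27. \<exists>u\<in>WD5. w = coset_rep n \<circ> u"
proof (induction rule: WE6.induct)
  case WE6_id
  show ?case
    using WD5_id by (intro exI[of _ 0] conjI bexI[of _ id]) (simp_all add: coset_rep_0)
next
  case (WE6_step w i)
  then obtain n u where nu: "n < 27" "u \<in> WD5" "w = coset_rep n \<circ> u"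
    by blast
  obtain m u' where mu': "m < 27" "u' \<in> WD5" "refl (simple_root i) \<circ> coset_rep n = coset_rep m \<circ> u'"
    using refl_simple_root_comp_coset_rep[OF WE6_step.hyps(2) nu(1)] by blast
  have "refl (simple_root i) \<circ> w = coset_rep m \<circ> (u' \<circ> u)"
    using nu(3) mu'(3) by (metis comp_assoc)
  then show ?case
    using mu'(1) WD5_comp[OF mu'(2) nu(2)] by blast
qed

definition weight_coords :: "nat \<Rightarrow> int list" where
  "weight_coords n = mat_vec (coset_mats ! n) tbar_coords"

lemma coset_rep_tbar: "coset_rep n tbar = frac_vec 24 (weight_coords n)"
  using frac_mat_frac_vec[of 4 6] by (simp add: coset_rep_def tbar_frac_vec weight_coords_def)

lemma weight_coords_distinct: "distinct (map weight_coords [0..<27])"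
  unfolding weight_coords_def by code_simp

lemma coset_rep_tbar_inj:
  assumes "n < 27" "n' < 27" "coset_rep n tbar = coset_rep n' tbar"
  shows "n = n'"
proof -
  have "weight_coords n = weight_coords n'"
    using assms(3)
    by (intro frac_vec_inj[of 24]) (simp_all add: coset_rep_tbar weight_coords_def mat_vec_def)
  then show ?thesis
    using weight_coords_distinct assms(1,2)
      nth_eq_iff_index_eq[of "map weight_coords [0..<27]" n n']
    by simp
qed

lemma WE6_same_tbar:
  assumes "w \<in> WE6" "w' \<in> WE6" "w tbar = w' tbar"
  shows "\<exists>u\<in>WD5. w = w' \<circ> u"
proof -
  obtain n u where w: "n < 27" "u \<in> WD5" "w = coset_rep n \<circ> u"
    using WE6_coset_decomposition[OF assms(1)] by blast
  obtain n' u' where w': "n' < 27" "u' \<in> WD5" "w' = coset_rep n' \<circ> u'"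
    using WE6_coset_decomposition[OF assms(2)] by blast
  have "n = n'"
    using coset_rep_tbar_inj w w' assms(3) by (simp add: WD5_fixes_tbar)
  obtain v where v: "v \<in> WD5" "u' \<circ> v = id"
    using WD5_right_inverse[OF w'(2)] by blast
  have "w = w' \<circ> (v \<circ> u)"
    using w(3) w'(3) \<open>n = n'\<close> v(2) by (metis comp_assoc id_comp)
  then show ?thesis
    using WD5_comp[OF v(1) w(2)] by blast
qed

lemma Lambda_weight_coords:
  assumes "l \<in> Lambda"
  shows "\<exists>n<27. l = frac_vec 24 (weight_coords n)"
proof -
  obtain w where w: "w \<in> WE6" "l = w tbar"
    using assms unfolding Lambda_def by blast
  obtain n u where "n < 27" "u \<in> WD5" "w = coset_rep n \<circ> u"
    using WE6_coset_decomposition[OF w(1)] by blast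
  then show ?thesis
    using w(2) by (auto simp: WD5_fixes_tbar coset_rep_tbar)
qed

lemma coset_self: "w \<in> coset w"
  unfolding coset_def using WD5_id by (metis (mono_tags) comp_id mem_Collect_eq)

lemma coset_comp_WD5:
  assumes "u \<in> WD5"
  shows "coset (w \<circ> u) = coset w"
proof
  show "coset (w \<circ> u) \<subseteq> coset w"
    using WD5_comp[OF assms] by (auto simp: coset_def comp_assoc)
next
  obtain v where v: "v \<in> WD5" "u \<circ> v = id"
    using WD5_right_inverse[OF assms] by blast
  have "w \<circ> u' = (w \<circ> u) \<circ> (v \<circ> u')" for u'
    using v(2) by (metis comp_assoc id_comp)
  then show "coset w \<subseteq> coset (w \<circ> u)"
    using WD5_comp[OF v(1)] unfolding coset_def by blast
qed

lemma coset_eq_iff_tbar: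
  assumes "w \<in> WE6" "w' \<in> WE6"
  shows "coset w = coset w' \<longleftrightarrow> w tbar = w' tbar"
proof
  assume "coset w = coset w'"
  then have "w \<in> coset w'"
    using coset_self by blast
  then show "w tbar = w' tbar"
    by (auto simp: coset_def WD5_fixes_tbar)
next
  assume "w tbar = w' tbar"
  then show "coset w = coset w'"
    using WE6_same_tbar[OF assms] coset_comp_WD5 by blast
qed

lemma image_comp_coset: "(\<lambda>u. f \<circ> u) ` coset w = coset (f \<circ> w)"
  by (auto simp: coset_def comp_assoc)

section \<open>Roots\<close>

lemma sum_apply: "(sum F A) k = (\<Sum>i\<in>A. F i k)" for F :: "nat \<Rightarrow> vec"
  by (induct A rule: infinite_finite_induct) auto

lemma PhiE6_cases:
  assumes "a \<in> PhiE6"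
  obtains (plus) s i j where "a = s *\<^sub>v (e i + e j)" "s \<in> {1, -1}" "1 \<le> i" "i < j" "j \<le> (5::nat)"
  | (minus) s i j where "a = s *\<^sub>v (e i - e j)" "s \<in> {1, -1}" "1 \<le> i" "i < j" "j \<le> (5::nat)"
  | (half) s mu where "a = s *\<^sub>v ((1/2) *\<^sub>v ((\<Sum>k\<in>{1..5}. mu k *\<^sub>v e k) + e 8 - e 7 - e 6))"
      "s \<in> {1, -1}" "\<forall>k\<in>{1..5}. mu k \<in> {1, -1}" "(\<Prod>k\<in>{1..5}. mu k) = (1::real)"
  using assms unfolding PhiE6_def by blast

lemma PhiE6_uminus:
  assumes "a \<in> PhiE6"
  shows "- a \<in> PhiE6"
proof -
  have neg: "- (s *\<^sub>v v) = (- s) *\<^sub>v v" for s v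
    by (simp add: fun_eq_iff)
  from assms show ?thesis
  proof (cases rule: PhiE6_cases)
    case (plus s i j)
    then have "- a = (- s) *\<^sub>v (e i + e j)" "- s \<in> {1, -1}"
      by (auto simp: neg)
    then show ?thesis
      using plus(3-5) unfolding PhiE6_def by blast
  next
    case (minus s i j)
    then have "- a = (- s) *\<^sub>v (e i - e j)" "- s \<in> {1, -1}"
      by (auto simp: neg)
    then show ?thesis
      using minus(3-5) unfolding PhiE6_def by blast
  next
    case (half s mu)
    then have "- a = (- s) *\<^sub>v ((1/2) *\<^sub>v ((\<Sum>k\<in>{1..5}. mu k *\<^sub>v e k) + e 8 - e 7 - e 6))"
        "- s \<in> {1, -1}"
      by (auto simp: neg)
    then show ?thesis
      using half(3,4) unfolding PhiE6_def by blast
  qed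
qed

text \<open>Integer coordinates over the denominator 2 of the 72 roots.\<close>

definition root_coords :: "int list list" where
  "root_coords =
   [[2, 2, 0, 0, 0, 0, 0, 0], [2, -2, 0, 0, 0, 0, 0, 0], [-2, -2, 0, 0, 0, 0, 0, 0], [-2, 2, 0, 0, 0, 0, 0, 0],
    [2, 0, 2, 0, 0, 0, 0, 0], [2, 0, -2, 0, 0, 0, 0, 0], [-2, 0, -2, 0, 0, 0, 0, 0], [-2, 0, 2, 0, 0, 0, 0, 0],
    [2, 0, 0, 2, 0, 0, 0, 0], [2, 0, 0, -2, 0, 0, 0, 0], [-2, 0, 0, -2, 0, 0, 0, 0], [-2, 0, 0, 2, 0, 0, 0, 0],
    [2, 0, 0, 0, 2, 0, 0, 0], [2, 0, 0, 0, -2, 0, 0, 0], [-2, 0, 0, 0, -2, 0, 0, 0], [-2, 0, 0, 0, 2, 0, 0, 0],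
    [0, 2, 2, 0, 0, 0, 0, 0], [0, 2, -2, 0, 0, 0, 0, 0], [0, -2, -2, 0, 0, 0, 0, 0], [0, -2, 2, 0, 0, 0, 0, 0],
    [0, 2, 0, 2, 0, 0, 0, 0], [0, 2, 0, -2, 0, 0, 0, 0], [0, -2, 0, -2, 0, 0, 0, 0], [0, -2, 0, 2, 0, 0, 0, 0],
    [0, 2, 0, 0, 2, 0, 0, 0], [0, 2, 0, 0, -2, 0, 0, 0], [0, -2, 0, 0, -2, 0, 0, 0], [0, -2, 0, 0, 2, 0, 0, 0],
    [0, 0, 2, 2, 0, 0, 0, 0], [0, 0, 2, -2, 0, 0, 0, 0], [0, 0, -2, -2, 0, 0, 0, 0], [0, 0, -2, 2, 0, 0, 0, 0],
    [0, 0, 2, 0, 2, 0, 0, 0], [0, 0, 2, 0, -2, 0, 0, 0], [0, 0, -2, 0, -2, 0, 0, 0], [0, 0, -2, 0, 2, 0, 0, 0],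
    [0, 0, 0, 2, 2, 0, 0, 0], [0, 0, 0, 2, -2, 0, 0, 0], [0, 0, 0, -2, -2, 0, 0, 0], [0, 0, 0, -2, 2, 0, 0, 0],
    [1, 1, 1, 1, 1, -1, -1, 1], [-1, -1, -1, -1, -1, 1, 1, -1], [1, 1, 1, -1, -1, -1, -1, 1], [-1, -1, -1, 1, 1, 1, 1, -1],
    [1, 1, -1, 1, -1, -1, -1, 1], [-1, -1, 1, -1, 1, 1, 1, -1], [1, 1, -1, -1, 1, -1, -1, 1], [-1, -1, 1, 1, -1, 1, 1, -1],
    [1, -1, 1, 1, -1, -1, -1, 1], [-1, 1, -1, -1, 1, 1, 1, -1], [1, -1, 1, -1, 1, -1, -1, 1], [-1, 1, -1, 1, -1, 1, 1, -1],
    [1, -1, -1, 1, 1, -1, -1, 1], [-1, 1, 1, -1, -1, 1, 1, -1], [1, -1, -1, -1, -1, -1, -1, 1], [-1, 1, 1, 1, 1, 1, 1, -1],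
    [-1, 1, 1, 1, -1, -1, -1, 1], [1, -1, -1, -1, 1, 1, 1, -1], [-1, 1, 1, -1, 1, -1, -1, 1], [1, -1, -1, 1, -1, 1, 1, -1],
    [-1, 1, -1, 1, 1, -1, -1, 1], [1, -1, 1, -1, -1, 1, 1, -1], [-1, 1, -1, -1, -1, -1, -1, 1], [1, -1, 1, 1, 1, 1, 1, -1],
    [-1, -1, 1, 1, 1, -1, -1, 1], [1, 1, -1, -1, -1, 1, 1, -1], [-1, -1, 1, -1, -1, -1, -1, 1], [1, 1, -1, 1, 1, 1, 1, -1],
    [-1, -1, -1, 1, -1, -1, -1, 1], [1, 1, 1, -1, 1, 1, 1, -1], [-1, -1, -1, -1, 1, -1, -1, 1], [1, 1, 1, 1, -1, 1, 1, -1]]"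

lemma root_coords_length: "length root_coords = 72" "\<forall>r\<in>set root_coords. length r = 8"
  by code_simp+

definition pair_root_coords :: "int \<Rightarrow> int \<Rightarrow> nat \<Rightarrow> nat \<Rightarrow> int list" where
  "pair_root_coords s t i j =
     map (\<lambda>k. 2 * s * ((if Suc k = i then 1 else 0) + t * (if Suc k = j then 1 else 0))) [0..<8]"

definition half_root_coords :: "int \<Rightarrow> int list \<Rightarrow> int list" where
  "half_root_coords s m = map (\<lambda>x. s * x) m @ [-s, -s, s]"

lemma pair_root_coords_in_root_coords:
  "list_all (\<lambda>s. list_all (\<lambda>t. list_all (\<lambda>i. list_all (\<lambda>j.
     i < j \<longrightarrow> pair_root_coords s t i j \<in> set root_coords) [1..<6]) [1..<6]) [1, -1]) [1, -1]"
  by code_simp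

lemma half_root_coords_in_root_coords:
  "list_all (\<lambda>s. list_all (\<lambda>m. prod_list m = 1 \<longrightarrow> half_root_coords s m \<in> set root_coords)
     (List.n_lists 5 [1, -1])) [1, -1]"
  by code_simp

lemma pair_root_frac_vec:
  assumes "i \<in> {1..8}" "j \<in> {1..8}"
  shows "of_int s *\<^sub>v (e i + of_int t *\<^sub>v e j) = frac_vec 2 (pair_root_coords s t i j)"
proof (rule frac_vec_eqI)
  fix k :: nat
  assume "k \<in> {1..8}"
  then show "(of_int s *\<^sub>v (e i + of_int t *\<^sub>v e j)) k = frac_vec 2 (pair_root_coords s t i j) k"
    by (auto simp: e_def frac_vec_def pair_root_coords_def)
qed (use assms in \<open>auto simp: e_def\<close>)

lemma half_root_frac_vec:
  assumes "\<forall>k\<in>{1..5}. mu k = of_int (m ! (k - 1))" "length m = 5"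
  shows "of_int s *\<^sub>v ((1/2) *\<^sub>v ((\<Sum>k\<in>{1..5}. mu k *\<^sub>v e k) + e 8 - e 7 - e 6)) =
    frac_vec 2 (half_root_coords s m)"
proof (rule frac_vec_eqI)
  have sum_e: "(\<Sum>k\<in>{1..5}. mu k *\<^sub>v e k) j = (if j \<in> {1..5} then mu j else 0)" for j
  proof -
    have "(\<Sum>k\<in>{1..5}. mu k *\<^sub>v e k) j = (\<Sum>k\<in>{1..5}. if k = j then mu k else 0)"
      unfolding sum_apply by (rule sum.cong) (auto simp: e_def)
    then show ?thesis
      by simp
  qed
  fix k :: nat
  assume "k \<in> {1..8}"
  then have "k = 1 \<or> k = 2 \<or> k = 3 \<or> k = 4 \<or> k = 5 \<or> k = 6 \<or> k = 7 \<or> k = 8"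
    by auto
  then show "(of_int s *\<^sub>v ((1/2) *\<^sub>v ((\<Sum>k\<in>{1..5}. mu k *\<^sub>v e k) + e 8 - e 7 - e 6))) k =
      frac_vec 2 (half_root_coords s m) k"
    unfolding smul_apply plus_fun_apply minus_apply sum_e using assms
    by (elim disjE; simp only:; simp add: e_def frac_vec_def half_root_coords_def nth_append)
next
  fix k :: nat
  assume "k \<notin> {1..8}"
  then show "(of_int s *\<^sub>v ((1/2) *\<^sub>v ((\<Sum>k\<in>{1..5}. mu k *\<^sub>v e k) + e 8 - e 7 - e 6))) k = 0"
    by (auto simp: sum_apply e_def)
qed

lemma sign_of_int:
  assumes "s \<in> {1, -1 :: real}"
  obtains s' :: int where "s = of_int s'" "s' \<in> {1, -1}"
  using assms by (metis insert_iff of_int_1 of_int_minus singletonD)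

lemma PhiE6_frac_vec:
  assumes "a \<in> PhiE6"
  shows "\<exists>r\<in>set root_coords. a = frac_vec 2 r"
  using assms
proof (cases rule: PhiE6_cases)
  case (plus s i j)
  obtain s' where s': "s = of_int s'" "s' \<in> {1, -1}"
    using sign_of_int[OF plus(2)] .
  have "a = frac_vec 2 (pair_root_coords s' 1 i j)"
    using pair_root_frac_vec[of i j s' 1] plus by (simp add: s'(1) smul_def)
  moreover have "pair_root_coords s' 1 i j \<in> set root_coords"
    using pair_root_coords_in_root_coords plus s'(2) by (auto simp: list_all_iff)
  ultimately show ?thesis
    by blast
next
  case (minus s i j)
  obtain s' where s': "s = of_int s'" "s' \<in> {1, -1}"
    using sign_of_int[OF minus(2)] .
  have "a = frac_vec 2 (pair_root_coords s' (-1) i j)"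
    using pair_root_frac_vec[of i j s' "-1"] minus by (simp add: s'(1) fun_eq_iff)
  moreover have "pair_root_coords s' (-1) i j \<in> set root_coords"
    using pair_root_coords_in_root_coords minus s'(2) by (auto simp: list_all_iff)
  ultimately show ?thesis
    by blast
next
  case (half s mu)
  obtain s' where s': "s = of_int s'" "s' \<in> {1, -1}"
    using sign_of_int[OF half(2)] .
  define sgn :: "nat \<Rightarrow> int" where "sgn k = (if mu k = 1 then 1 else -1)" for k
  define m where "m = [sgn 1, sgn 2, sgn 3, sgn 4, sgn 5]"
  have mu: "\<forall>k\<in>{1..5}. mu k = of_int (m ! (k - 1))"
  proof
    fix k :: nat
    assume "k \<in> {1..5}"
    then have "k = 1 \<or> k = 2 \<or> k = 3 \<or> k = 4 \<or> k = 5" "mu k \<in> {1, -1}"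
      using half(3) by auto
    then show "mu k = of_int (m ! (k - 1))"
      by (auto simp: m_def sgn_def)
  qed
  have "a = frac_vec 2 (half_root_coords s' m)"
    using half_root_frac_vec[OF mu, of s'] half(1) s'(1) by (simp add: m_def)
  moreover have "half_root_coords s' m \<in> set root_coords"
  proof -
    have "real_of_int (prod_list m) = (\<Prod>k\<in>{1..5}. mu k)"
      using mu by (simp add: m_def numeral_eq_Suc prod.atLeast_Suc_atMost)
    then have "prod_list m = 1"
      using half(4) by simp
    moreover have "m \<in> set (List.n_lists 5 [1, -1])"
      by (simp add: set_n_lists m_def sgn_def)
    ultimately show ?thesis
      using half_root_coords_in_root_coords s'(2) by (auto simp: list_all_iff)
  qed
  ultimately show ?thesis
    by blast
qed

text \<open>Every root reflection lies in \<open>W(E6)\<close>: an entry \<open>(r, i, None)\<close> of \<open>root_chain\<close> says that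
  root \<open>r\<close> is the simple root \<open>\<alpha>\<^sub>i\<close>, and \<open>(r, i, Some p)\<close> that root \<open>r\<close> is \<open>\<sigma>\<^sub>i\<close> applied to an
  earlier root \<open>p\<close>, so that \<open>\<sigma>\<^sub>r = \<sigma>\<^sub>i \<sigma>\<^sub>p \<sigma>\<^sub>i\<close>.\<close>

definition root_chain :: "(nat \<times> nat \<times> nat option) list" where
  "root_chain =
   [(54, 1, None), (0, 2, None), (3, 3, None), (19, 4, None), (31, 5, None), (39, 6, None),
    (55, 1, Some 54), (62, 3, Some 54), (2, 2, Some 0), (4, 4, Some 0), (1, 3, Some 3), (7, 4, Some 3),
    (17, 4, Some 19), (23, 5, Some 19), (29, 5, Some 31), (35, 6, Some 31), (37, 6, Some 39), (63, 3, Some 55),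
    (66, 4, Some 62), (6, 4, Some 2), (16, 3, Some 4), (8, 5, Some 4), (5, 4, Some 1), (11, 5, Some 7),
    (21, 5, Some 17), (27, 6, Some 23), (33, 6, Some 29), (67, 4, Some 63), (42, 2, Some 66), (68, 5, Some 66),
    (18, 3, Some 6), (10, 5, Some 6), (20, 5, Some 16), (12, 6, Some 8), (9, 5, Some 5), (15, 6, Some 11),
    (25, 6, Some 21), (43, 2, Some 67), (69, 5, Some 67), (44, 5, Some 42), (70, 6, Some 68), (22, 5, Some 18),
    (14, 6, Some 10), (28, 4, Some 20), (24, 6, Some 20), (13, 6, Some 9), (45, 5, Some 43), (71, 6, Some 69),
    (48, 4, Some 44), (46, 6, Some 44), (30, 4, Some 22), (26, 6, Some 22), (32, 6, Some 28), (49, 4, Some 45),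
    (47, 6, Some 45), (56, 3, Some 48), (50, 6, Some 48), (34, 6, Some 30), (36, 5, Some 32), (57, 3, Some 49),
    (51, 6, Some 49), (58, 6, Some 56), (52, 5, Some 50), (38, 5, Some 34), (59, 6, Some 57), (53, 5, Some 51),
    (60, 5, Some 58), (61, 5, Some 59), (64, 4, Some 60), (65, 4, Some 61), (40, 2, Some 64), (41, 2, Some 65)]"

definition root_chain_ok :: "nat \<Rightarrow> bool" where
  "root_chain_ok k =
     (case root_chain ! k of (r, i, q) \<Rightarrow>
        r < 72 \<and> 1 \<le> i \<and> i \<le> 6 \<and>
        (case q of
          None \<Rightarrow> root_coords ! r = simple_root_coords i
        | Some p \<Rightarrow> p \<in> set (map fst (take k root_chain)) \<and>
            same_frac_vec 16 (mat_vec (refl_mat (simple_root_coords i)) (root_coords ! p))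
              2 (root_coords ! r)))"

lemma root_chain_correct: "list_all root_chain_ok [0..<length root_chain]"
  unfolding root_chain_ok_def by code_simp

lemma root_chain_complete: "list_all (\<lambda>r. r \<in> set (map fst root_chain)) [0..<72]"
  by code_simp

lemma refl_root_chain_WE6:
  "k < length root_chain \<Longrightarrow> refl (frac_vec 2 (root_coords ! fst (root_chain ! k))) \<in> WE6"
proof (induction k rule: less_induct)
  case (less k)
  obtain r i q where riq: "root_chain ! k = (r, i, q)"
    by (cases "root_chain ! k") auto
  have ok: "root_chain_ok k"
    using root_chain_correct less.prems by (simp add: list_all_iff)
  then have i: "i \<in> {1..6}"
    by (simp add: root_chain_ok_def riq)
  show ?case
  proof (cases q)
    case None
    then have "frac_vec 2 (root_coords ! r) = simple_root i"
      using ok by (simp add: root_chain_ok_def riq simple_root_frac_vec[OF i])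
    then show ?thesis
      using riq refl_simple_root_WE6[OF i] by simp
  next
    case (Some p)
    then have p: "p \<in> set (map fst (take k root_chain))"
      and step: "same_frac_vec 16 (mat_vec (refl_mat (simple_root_coords i)) (root_coords ! p))
        2 (root_coords ! r)"
      using ok by (simp_all add: root_chain_ok_def riq)
    obtain k' where k': "k' < k" "fst (root_chain ! k') = p"
      using p less.prems by (auto simp: in_set_conv_nth)
    have IH: "refl (frac_vec 2 (root_coords ! p)) \<in> WE6"
      using less.IH[of k'] k' less.prems by simp
    have "frac_vec 2 (root_coords ! r) =
        frac_vec 16 (mat_vec (refl_mat (simple_root_coords i)) (root_coords ! p))"
      using same_frac_vec_eq[OF _ _ step] by simp
    also have "\<dots> = refl (simple_root i) (frac_vec 2 (root_coords ! p))"
      using frac_mat_frac_vec[of 8 2] by (simp add: refl_simple_root_frac_mat[OF i])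
    finally have "refl (frac_vec 2 (root_coords ! r)) =
        refl (simple_root i) \<circ> refl (frac_vec 2 (root_coords ! p)) \<circ> refl (simple_root i)"
      using refl_refl_conj ip_simple_root[OF i] by simp
    also have "\<dots> \<in> WE6"
      using IH refl_simple_root_WE6[OF i] by (intro WE6_comp)
    finally show ?thesis
      using riq by simp
  qed
qed

lemma refl_PhiE6_WE6:
  assumes "a \<in> PhiE6"
  shows "refl a \<in> WE6"
proof -
  obtain r where r: "r \<in> set root_coords" "a = frac_vec 2 r"
    using PhiE6_frac_vec[OF assms] by blast
  then obtain n where n: "n < 72" "root_coords ! n = r"
    using root_coords_length(1) by (metis in_set_conv_nth)
  have "n \<in> set (map fst root_chain)"
    using root_chain_complete n(1) by (simp add: list_all_iff)
  then obtain k where k: "k < length root_chain" "fst (root_chain ! k) = n"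
    by (auto simp: in_set_conv_nth)
  show ?thesis
    using refl_root_chain_WE6[OF k(1)] k(2) n(2) r(2) by simp
qed

text \<open>Each root is \<open>\<plusminus>\<close> a nonnegative integer combination of simple roots: the \<open>k\<close>-th entry
  \<open>(s, c)\<close> of \<open>positive_root_coeffs\<close> gives the sign \<open>s\<close> and the coefficients \<open>c\<close> of root \<open>k\<close>.\<close>

definition positive_root_coeffs :: "(int \<times> nat list) list" where
  "positive_root_coeffs =
   [(1, [0, 1, 0, 0, 0, 0]), (-1, [0, 0, 1, 0, 0, 0]), (-1, [0, 1, 0, 0, 0, 0]),
    (1, [0, 0, 1, 0, 0, 0]), (1, [0, 1, 0, 1, 0, 0]), (-1, [0, 0, 1, 1, 0, 0]),
    (-1, [0, 1, 0, 1, 0, 0]), (1, [0, 0, 1, 1, 0, 0]), (1, [0, 1, 0, 1, 1, 0]),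
    (-1, [0, 0, 1, 1, 1, 0]), (-1, [0, 1, 0, 1, 1, 0]), (1, [0, 0, 1, 1, 1, 0]),
    (1, [0, 1, 0, 1, 1, 1]), (-1, [0, 0, 1, 1, 1, 1]), (-1, [0, 1, 0, 1, 1, 1]),
    (1, [0, 0, 1, 1, 1, 1]), (1, [0, 1, 1, 1, 0, 0]), (-1, [0, 0, 0, 1, 0, 0]),
    (-1, [0, 1, 1, 1, 0, 0]), (1, [0, 0, 0, 1, 0, 0]), (1, [0, 1, 1, 1, 1, 0]),
    (-1, [0, 0, 0, 1, 1, 0]), (-1, [0, 1, 1, 1, 1, 0]), (1, [0, 0, 0, 1, 1, 0]),
    (1, [0, 1, 1, 1, 1, 1]), (-1, [0, 0, 0, 1, 1, 1]), (-1, [0, 1, 1, 1, 1, 1]),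
    (1, [0, 0, 0, 1, 1, 1]), (1, [0, 1, 1, 2, 1, 0]), (-1, [0, 0, 0, 0, 1, 0]),
    (-1, [0, 1, 1, 2, 1, 0]), (1, [0, 0, 0, 0, 1, 0]), (1, [0, 1, 1, 2, 1, 1]),
    (-1, [0, 0, 0, 0, 1, 1]), (-1, [0, 1, 1, 2, 1, 1]), (1, [0, 0, 0, 0, 1, 1]),
    (1, [0, 1, 1, 2, 2, 1]), (-1, [0, 0, 0, 0, 0, 1]), (-1, [0, 1, 1, 2, 2, 1]),
    (1, [0, 0, 0, 0, 0, 1]), (1, [1, 2, 2, 3, 2, 1]), (-1, [1, 2, 2, 3, 2, 1]),
    (1, [1, 1, 1, 1, 0, 0]), (-1, [1, 1, 1, 1, 0, 0]), (1, [1, 1, 1, 1, 1, 0]),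
    (-1, [1, 1, 1, 1, 1, 0]), (1, [1, 1, 1, 1, 1, 1]), (-1, [1, 1, 1, 1, 1, 1]),
    (1, [1, 1, 1, 2, 1, 0]), (-1, [1, 1, 1, 2, 1, 0]), (1, [1, 1, 1, 2, 1, 1]),
    (-1, [1, 1, 1, 2, 1, 1]), (1, [1, 1, 1, 2, 2, 1]), (-1, [1, 1, 1, 2, 2, 1]),
    (1, [1, 0, 0, 0, 0, 0]), (-1, [1, 0, 0, 0, 0, 0]), (1, [1, 1, 2, 2, 1, 0]),
    (-1, [1, 1, 2, 2, 1, 0]), (1, [1, 1, 2, 2, 1, 1]), (-1, [1, 1, 2, 2, 1, 1]),
    (1, [1, 1, 2, 2, 2, 1]), (-1, [1, 1, 2, 2, 2, 1]), (1, [1, 0, 1, 0, 0, 0]),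
    (-1, [1, 0, 1, 0, 0, 0]), (1, [1, 1, 2, 3, 2, 1]), (-1, [1, 1, 2, 3, 2, 1]),
    (1, [1, 0, 1, 1, 0, 0]), (-1, [1, 0, 1, 1, 0, 0]), (1, [1, 0, 1, 1, 1, 0]),
    (-1, [1, 0, 1, 1, 1, 0]), (1, [1, 0, 1, 1, 1, 1]), (-1, [1, 0, 1, 1, 1, 1])]"

definition simple_root_comb :: "nat list \<Rightarrow> int list" where
  "simple_root_comb c = map (\<lambda>k. \<Sum>i<6. int (c ! i) * simple_root_coords (Suc i) ! k) [0..<8]"

lemma positive_root_coeffs_correct:
  "list_all (\<lambda>k. case positive_root_coeffs ! k of (s, c) \<Rightarrow>
     (s = 1 \<or> s = -1) \<and> map (\<lambda>x. s * x) (root_coords ! k) = simple_root_comb c) [0..<72]"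
  unfolding simple_root_comb_def by code_simp

lemma smul_frac_vec: "length x = 8 \<Longrightarrow> of_int s *\<^sub>v frac_vec d x = frac_vec d (map (\<lambda>y. s * y) x)"
  by (auto simp: frac_vec_def fun_eq_iff)

lemma sum_simple_roots_frac_vec:
  "(\<Sum>i\<in>{1..6}. real (c ! (i - 1)) *\<^sub>v simple_root i) = frac_vec 2 (simple_root_comb c)"
proof (rule frac_vec_eqI)
  fix k :: nat
  assume k: "k \<in> {1..8}"
  have "(\<Sum>i\<in>{1..6}. real (c ! (i - 1)) *\<^sub>v simple_root i) k =
      (\<Sum>i\<in>{1..6}. (\<lambda>j. real (c ! j) * of_int (simple_root_coords (Suc j) ! (k - 1)) / 2) (i - 1))"
    unfolding sum_apply using k by (intro sum.cong) (auto simp: simple_root_frac_vec frac_vec_def)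
  also have "\<dots> = (\<Sum>j<6. real (c ! j) * of_int (simple_root_coords (Suc j) ! (k - 1)) / 2)"
    by (rule sum_atLeast_1_shift)
  also have "\<dots> = frac_vec 2 (simple_root_comb c) k"
  proof -
    have "k - 1 < 8"
      using k by auto
    then show ?thesis
      using k by (simp add: frac_vec_def simple_root_comb_def sum_divide_distrib)
  qed
  finally show "(\<Sum>i\<in>{1..6}. real (c ! (i - 1)) *\<^sub>v simple_root i) k =
      frac_vec 2 (simple_root_comb c) k" .
next
  fix k :: nat
  assume "k \<notin> {1..8}"
  then show "(\<Sum>i\<in>{1..6}. real (c ! (i - 1)) *\<^sub>v simple_root i) k = 0"
    by (auto simp: sum_apply simple_root_frac_vec frac_vec_def intro!: sum.neutral)
qed

lemma PhiE6_pos_or_neg: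
  assumes "a \<in> PhiE6"
  shows "a \<in> pos_roots \<or> - a \<in> pos_roots"
proof -
  obtain r where r: "r \<in> set root_coords" "a = frac_vec 2 r"
    using PhiE6_frac_vec[OF assms] by blast
  then obtain n where n: "n < 72" "root_coords ! n = r"
    using root_coords_length(1) by (metis in_set_conv_nth)
  obtain s c where sc: "positive_root_coeffs ! n = (s, c)"
    by fastforce
  have "case positive_root_coeffs ! n of (s, c) \<Rightarrow>
      (s = 1 \<or> s = -1) \<and> map (\<lambda>x. s * x) (root_coords ! n) = simple_root_comb c"
    using positive_root_coeffs_correct n(1) by (simp add: list_all_iff)
  then have s: "s = 1 \<or> s = -1" and comb: "map (\<lambda>x. s * x) r = simple_root_comb c"
    using sc n(2) by auto
  have "of_int s *\<^sub>v a = frac_vec 2 (simple_root_comb c)"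
    using r root_coords_length(2) by (simp add: smul_frac_vec comb)
  also have "\<dots> = (\<Sum>i\<in>{1..6}. real (c ! (i - 1)) *\<^sub>v simple_root i)"
    by (rule sum_simple_roots_frac_vec[symmetric])
  finally have "of_int s *\<^sub>v a = (\<Sum>i\<in>{1..6}. real (c ! (i - 1)) *\<^sub>v simple_root i)" .
  moreover have "of_int s *\<^sub>v a \<in> PhiE6"
    using s assms PhiE6_uminus by (auto simp: smul_one smul_minus_one)
  ultimately have "of_int s *\<^sub>v a \<in> pos_roots"
    unfolding pos_roots_def by (auto intro!: exI[of _ "\<lambda>i. c ! (i - 1)"])
  then show ?thesis
    using s by (auto simp: smul_one smul_minus_one)
qed

lemma weight_root_ip_table:
  "list_all (\<lambda>w. int_dot w w = 768 \<and> list_all (\<lambda>r. int_dot w r \<in> {-48, 0, 48}) root_coords)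
     (map weight_coords [0..<27])"
  "list_all (\<lambda>r. int_dot r r = 8) root_coords"
  unfolding weight_coords_def by code_simp+

lemma Lambda_ip_PhiE6:
  assumes "l \<in> Lambda" "b \<in> PhiE6"
  shows "ip l b \<in> {-1, 0, 1}"
proof -
  obtain n where n: "n < 27" "l = frac_vec 24 (weight_coords n)"
    using Lambda_weight_coords[OF assms(1)] by blast
  obtain r where r: "r \<in> set root_coords" "b = frac_vec 2 r"
    using PhiE6_frac_vec[OF assms(2)] by blast
  have "int_dot (weight_coords n) r \<in> {-48, 0, 48}"
    using weight_root_ip_table(1) n(1) r(1) by (auto simp: list_all_iff)
  then show ?thesis
    using n(2) r(2) by (auto simp: ip_frac_vec)
qed

lemma Lambda_norm:
  assumes "l \<in> Lambda"
  shows "ip l l = 4/3"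
proof -
  obtain n where n: "n < 27" "l = frac_vec 24 (weight_coords n)"
    using Lambda_weight_coords[OF assms] by blast
  then have "int_dot (weight_coords n) (weight_coords n) = 768"
    using weight_root_ip_table(1) by (auto simp: list_all_iff)
  then show ?thesis
    using n(2) by (simp add: ip_frac_vec)
qed

lemma PhiE6_norm:
  assumes "b \<in> PhiE6"
  shows "ip b b = 2"
proof -
  obtain r where r: "r \<in> set root_coords" "b = frac_vec 2 r"
    using PhiE6_frac_vec[OF assms] by blast
  then have "int_dot r r = 8"
    using weight_root_ip_table(2) by (simp add: list_all_iff)
  then show ?thesis
    using r(2) by (simp add: ip_frac_vec)
qed

section \<open>The GKM graph\<close>

lemma label_ideal_uminus: "label_ideal (- b) = label_ideal b"
proof -
  have neg: "(\<lambda>v. - f v) \<in> HBT" if "f \<in> HBT" for f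
    using HBT_mult[OF HBT_const[of "-1"] that] by simp
  have ip_neg: "ip (- c) v = - ip c v" for c v
    by (simp add: ip_def sum_negf)
  have sub: "label_ideal (- c) \<subseteq> label_ideal c" for c
  proof
    fix g
    assume "g \<in> label_ideal (- c)"
    then obtain f where "f \<in> HBT" "g = (\<lambda>v. ip (- c) v * f v)"
      unfolding label_ideal_def by blast
    then show "g \<in> label_ideal c"
      unfolding label_ideal_def by (intro CollectI exI[of _ "\<lambda>v. - f v"]) (simp add: neg ip_neg)
  qed
  show ?thesis
    using sub[of b] sub[of "- b"] by simp
qed

lemma GKM_edge_coset_iff:
  assumes "w \<in> WE6" "w' \<in> WE6"
  shows "GKM_edge (coset w) (coset w') b \<longleftrightarrow>
    b \<in> pos_roots \<and> w tbar \<noteq> w' tbar \<and> refl b (w tbar) = w' tbar"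
proof -
  have vertices: "coset w \<in> GKM_vertices" "coset w' \<in> GKM_vertices"
    using assms unfolding GKM_vertices_def by blast+
  have image: "(\<lambda>u. refl b \<circ> u) ` coset w = coset w' \<longleftrightarrow> refl b (w tbar) = w' tbar"
    if "b \<in> pos_roots"
  proof -
    have "refl b \<circ> w \<in> WE6"
      using that assms(1) by (intro WE6_comp refl_PhiE6_WE6) (simp_all add: pos_roots_def)
    then show ?thesis
      using coset_eq_iff_tbar[OF _ assms(2)] by (simp add: image_comp_coset)
  qed
  show ?thesis
    using vertices image coset_eq_iff_tbar[OF assms] unfolding GKM_edge_def by blast
qed

lemma Lambda_refl_PhiE6_iff:
  assumes "l \<in> Lambda" "l' \<in> Lambda" "b \<in> PhiE6"
  shows "l \<noteq> l' \<and> refl b l = l' \<longleftrightarrow> l - l' = b \<or> l - l' = - b"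
proof
  assume refl: "l \<noteq> l' \<and> refl b l = l'"
  then have l': "l' = l - ip l b *\<^sub>v b"
    using refl_norm_2[OF PhiE6_norm[OF assms(3)]] by simp
  then have diff: "l - l' = ip l b *\<^sub>v b"
    by (simp add: fun_eq_iff)
  have "ip l b \<noteq> 0"
    using refl l' by (auto simp: fun_eq_iff)
  then have "ip l b = 1 \<or> ip l b = -1"
    using Lambda_ip_PhiE6[OF assms(1,3)] by auto
  then show "l - l' = b \<or> l - l' = - b"
    using diff by (auto simp: fun_eq_iff)
next
  assume "l - l' = b \<or> l - l' = - b"
  then obtain a where a: "a = b \<or> a = - b" "l - l' = a"
    by blast
  then have root: "a \<in> PhiE6"
    using assms(3) PhiE6_uminus by blast
  have "ip a a = ip l l - 2 * ip l l' + ip l' l'"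
    unfolding a(2)[symmetric] by (simp add: ip_diff_left ip_diff_right ip_commute[of l' l])
  then have "ip l l' = 1/3"
    using PhiE6_norm[OF root] Lambda_norm assms(1,2) by simp
  then have "ip l a = 1"
    unfolding a(2)[symmetric] using Lambda_norm[OF assms(1)] by (simp add: ip_diff_right)
  then have "refl a l = l - a"
    using refl_norm_2[OF PhiE6_norm[OF root]] by (simp add: fun_eq_iff)
  also have "\<dots> = l'"
    unfolding a(2)[symmetric] by (simp add: fun_eq_iff)
  finally have "refl a l = l'" .
  moreover have "refl a = refl b"
    using a(1) refl_uminus by auto
  moreover have "l \<noteq> l'"
    using a(2) PhiE6_norm[OF root] by (auto simp: ip_def)
  ultimately show "l \<noteq> l' \<and> refl b l = l'"
    by simp
qed

theorem proposition4p1: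
  fixes rho :: "vec \<Rightarrow> (vec \<Rightarrow> vec)" and lam lam' :: vec
  assumes "\<forall>l\<in>Lambda. rho l \<in> WE6 \<and> rho l tbar = l"
    and "lam \<in> Lambda" and "lam' \<in> Lambda"
  shows "(GKM_adjacent (coset (rho lam)) (coset (rho lam')) \<longleftrightarrow>
            (\<exists>a\<in>PhiE6. lam - lam' = a))
       \<and> (\<forall>a\<in>PhiE6. lam - lam' = a \<longrightarrow>
            (\<forall>b. GKM_edge (coset (rho lam)) (coset (rho lam')) b \<longrightarrow>
                 label_ideal b = label_ideal a))"
proof -
  have rho: "rho lam \<in> WE6" "rho lam tbar = lam" "rho lam' \<in> WE6" "rho lam' tbar = lam'"
    using assms by auto
  have edge: "GKM_edge (coset (rho lam)) (coset (rho lam')) b \<longleftrightarrow>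
      b \<in> pos_roots \<and> (lam - lam' = b \<or> lam - lam' = - b)" for b
    using GKM_edge_coset_iff[OF rho(1,3)] Lambda_refl_PhiE6_iff[OF assms(2,3)]
    by (auto simp: rho(2,4) pos_roots_def)
  have "GKM_adjacent (coset (rho lam)) (coset (rho lam')) \<longleftrightarrow> (\<exists>a\<in>PhiE6. lam - lam' = a)"
    unfolding GKM_adjacent_def edge
    using PhiE6_pos_or_neg PhiE6_uminus by (auto simp: pos_roots_def) (metis minus_minus)
  moreover have "label_ideal b = label_ideal a"
    if "lam - lam' = a" "GKM_edge (coset (rho lam)) (coset (rho lam')) b" for a b
    using that label_ideal_uminus unfolding edge by auto
  ultimately show ?thesis
    by blast
qed

end
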